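(* For the public-key scheme $\mathsf{FrodoPKE}$ with secret key $\mathbf S\in\mathbb Z_q^{n\times\bar n}$, there exists a quantum algorithm that makes one quantum query to $\mathsf{FrodoPKE}.\mathsf{Dec}_{\mathbf S}$ and recovers any choice of $\bar m$ of the $\bar n$ columns of $\mathbf S$. For each of the chosen columns, if that column has at least one odd entry, then the algorithm succeeds in recovering that column with probability at least $4/\pi^2$.
   Context: $\mathsf{FrodoPKE}$ with integer parameters $n,\bar m,\bar n$, modulus $q\ge2$ a power of $2$, number $B$ of encoded bits per entry, and discrete symmetric error distribution $\chi$: $\mathsf{KeyGen}$ samples uniform $\mathbf A\in\mathbb Z_q^{n\times n}$ and $\mathbf S,\mathbf E\leftarrow\chi$ in $\mathbb Z_q^{n\times\bar n}$, sets $\mathbf B=\mathbf A\mathbf S+\mathbf E$, public key $(\mathbf A,\mathbf B)$, secret key $\mathbf S$. Encryption of $\mathbf m\in\{0,1\}^{B\bar m\bar n}$, encoded as $\mathbf M\in\mathbb Z_q^{\bar m\times\bar n}$ whose entries are zero outside their $B$ most significant bits, samples $\mathbf S',\mathbf E'\leftarrow\chi$ in $\mathbb Z_q^{\bar m\times n}$, $\mathbf E''\leftarrow\chi$ in $\mathbb Z_q^{\bar m\times\bar n}$ and outputs $(\mathbf C_1,\mathbf C_2)=(\mathbf S'\mathbf A+\mathbf E',\mathbf M+\mathbf S'\mathbf B+\mathbf E'')$. $\mathsf{Dec}_{\mathbf S}(\mathbf C_1,\mathbf C_2)$ for $(\mathbf C_1,\mathbf C_2)\in\mathbb Z_q^{\bar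 m\times n}\times\mathbb Z_q^{\bar m\times\bar n}$ computes $\mathbf M=\mathbf C_2-\mathbf C_1\mathbf S$ and outputs, for each $(i,j)\in[\bar m]\times[\bar n]$, the integer in $\mathbb Z_{2^B}$ given by the $B$ most significant bits of $M_{i,j}$. A quantum query to $\mathsf{Dec}_{\mathbf S}$ means one application, on arbitrary superpositions of ciphertexts, of the unitary that maps $|\mathbf C_1,\mathbf C_2\rangle\bigotimes_{i,j}|z_{i,j}\rangle$ ($z_{i,j}\in\mathbb Z_{2^B}$) to $|\mathbf C_1,\mathbf C_2\rangle\bigotimes_{i,j}|z_{i,j}+\mathsf{Dec}_{\mathbf S}(\mathbf C_1,\mathbf C_2)_{i,j}\bmod 2^B\rangle$. *)

theory Defs
  imports Complex_Main
begin

text \<open>Matrices over Z_q are represented extensionally as functions nat => nat => int,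
  with entries in 0..q-1 inside the index range r x c and 0 outside.\<close>

type_synonym zmat = "nat \<Rightarrow> nat \<Rightarrow> int"

definition zmats :: "nat \<Rightarrow> nat \<Rightarrow> nat \<Rightarrow> zmat set" where
  "zmats r c q = {M. \<forall>i j. (i < r \<and> j < c \<longrightarrow> 0 \<le> M i j \<and> M i j < int q)
                        \<and> (\<not> (i < r \<and> j < c) \<longrightarrow> M i j = 0)}"

text \<open>FrodoPKE decryption: M = C2 - C1 S mod q, then the B most significant bits
  of each entry (q = 2^D, so these are M_ij div 2^(D-B) = M_ij div (q div 2^B)).\<close>

definition frodo_dec :: "nat \<Rightarrow> nat \<Rightarrow> nat \<Rightarrow> zmat \<Rightarrow> zmat \<Rightarrow> zmat \<Rightarrow> nat \<Rightarrow> nat \<Rightarrow> int" where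
  "frodo_dec n q B S C1 C2 i j =
     ((C2 i j - (\<Sum>k<n. C1 i k * S k j)) mod int q) div int (q div 2 ^ B)"

type_synonym frodo_basis = "zmat \<times> zmat \<times> zmat \<times> nat"

definition qspace :: "nat \<Rightarrow> nat \<Rightarrow> nat \<Rightarrow> nat \<Rightarrow> nat \<Rightarrow> nat set \<Rightarrow> frodo_basis set" where
  "qspace n mb nb q B W = zmats mb n q \<times> zmats mb nb q \<times> zmats mb nb (2 ^ B) \<times> W"

text \<open>Operators on the finite-dimensional space with orthonormal basis D, given by matrices.\<close>

definition unitary_on :: "'a set \<Rightarrow> ('a \<Rightarrow> 'a \<Rightarrow> complex) \<Rightarrow> bool" where
  "unitary_on D U \<longleftrightarrow> (\<forall>i\<in>D. \<forall>j\<in>D. (\<Sum>k\<in>D. cnj (U k i) * U k j) = (if i = j then 1 else 0))"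

definition apply_op :: "'a set \<Rightarrow> ('a \<Rightarrow> 'a \<Rightarrow> complex) \<Rightarrow> ('a \<Rightarrow> complex) \<Rightarrow> ('a \<Rightarrow> complex)" where
  "apply_op D U v = (\<lambda>i. \<Sum>j\<in>D. U i j * v j)"

definition ket :: "'a \<Rightarrow> ('a \<Rightarrow> complex)" where
  "ket x = (\<lambda>y. if y = x then 1 else 0)"

definition frodo_oracle_map :: "nat \<Rightarrow> nat \<Rightarrow> nat \<Rightarrow> nat \<Rightarrow> nat \<Rightarrow> zmat \<Rightarrow> frodo_basis \<Rightarrow> frodo_basis" where
  "frodo_oracle_map n mb nb q B S x = (case x of (C1, C2, z, w) \<Rightarrow>
     (C1, C2, (\<lambda>i j. if i < mb \<and> j < nb then (z i j + frodo_dec n q B S C1 C2 i j) mod 2 ^ B else z i j), w))"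

definition frodo_oracle :: "nat \<Rightarrow> nat \<Rightarrow> nat \<Rightarrow> nat \<Rightarrow> nat \<Rightarrow> zmat \<Rightarrow> frodo_basis \<Rightarrow> frodo_basis \<Rightarrow> complex" where
  "frodo_oracle n mb nb q B S x y = (if x = frodo_oracle_map n mb nb q B S y then 1 else 0)"

definition final_state :: "nat \<Rightarrow> nat \<Rightarrow> nat \<Rightarrow> nat \<Rightarrow> nat \<Rightarrow> nat set \<Rightarrow> zmat \<Rightarrow> frodo_basis
     \<Rightarrow> (frodo_basis \<Rightarrow> frodo_basis \<Rightarrow> complex) \<Rightarrow> (frodo_basis \<Rightarrow> frodo_basis \<Rightarrow> complex)
     \<Rightarrow> frodo_basis \<Rightarrow> complex" where
  "final_state n mb nb q B W S x0 U1 U2 =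
     (let D = qspace n mb nb q B W in
      apply_op D U2 (apply_op D (frodo_oracle n mb nb q B S) (apply_op D U1 (ket x0))))"

definition meas_prob :: "'a set \<Rightarrow> ('a \<Rightarrow> complex) \<Rightarrow> ('a \<Rightarrow> bool) \<Rightarrow> real" where
  "meas_prob D psi P = (\<Sum>x\<in>{x\<in>D. P x}. (cmod (psi x))\<^sup>2)"

end

theory Submission
  imports Defs "HOL-Analysis.Analysis" "HOL-Library.Real_Mod"
begin

(* Write e(x) = exp(2 pi i x) and let s_k be column cols k of S. Fourier transforms put the
   C1-register and the z-register, which starts at the indicator of the positions (k, cols k),
   into superposition; one decryption query with C2 = 0 then kicks back onto row k of
   C1 = X the phase e(-Dec_k / 2^B), where Dec_k = ((- X_k . s_k) mod q) div 2^(D-B) is the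
   decrypted entry (k, cols k). The rows of C1 carry independent amplitudes, so after the inverse
   Fourier transform row k equals s_k with probability |c|^2, where c is the Fourier coefficient
   at s_k of this phase as a function of X_k. Since s_k has an odd entry, X_k . s_k is uniformly
   distributed modulo q = 2^D, and c collapses to a geometric sum of modulus
   sin(pi/2^B) / (2^(D-B) sin(pi/2^D)), which is at least 2/pi by Jordan's inequality. *)

section \<open>Additive characters\<close>

definition e2pi :: "real \<Rightarrow> complex" where
  "e2pi x = cis (2 * pi * x)"

lemma e2pi_add: "e2pi (a + b) = e2pi a * e2pi b"
  by (simp add: e2pi_def cis_mult distrib_left)

lemma e2pi_of_int [simp]: "e2pi (of_int k) = 1"
  by (simp add: e2pi_def)

lemma e2pi_0 [simp]: "e2pi 0 = 1"
  by (simp add: e2pi_def)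

lemma norm_e2pi [simp]: "norm (e2pi x) = 1"
  by (simp add: e2pi_def)

lemma cnj_e2pi: "cnj (e2pi x) = e2pi (- x)"
  by (simp add: e2pi_def cis_cnj)

lemma e2pi_add_of_int [simp]: "e2pi (x + of_int k) = e2pi x"
  by (simp add: e2pi_add)

lemma e2pi_diff_of_int [simp]: "e2pi (x - of_int k) = e2pi x"
  using e2pi_add_of_int[of x "- k"] by simp

lemma e2pi_sum: "e2pi (sum f A) = (\<Prod>a\<in>A. e2pi (f a))"
proof (cases "finite A")
  case True
  then show ?thesis
    by (induction A rule: finite_induct) (auto simp: e2pi_add)
qed simp

lemma e2pi_sum_divide: "e2pi (of_int (sum f A) / c) = (\<Prod>a\<in>A. e2pi (of_int (f a) / c))"
  by (simp add: sum_divide_distrib e2pi_sum)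

lemma e2pi_power: "e2pi x ^ n = e2pi (real n * x)"
  unfolding e2pi_def Complex.DeMoivre by (simp add: mult_ac)

lemma e2pi_eq_1_iff: "e2pi x = 1 \<longleftrightarrow> x \<in> \<int>"
proof
  assume "e2pi x = 1"
  then obtain k where "2 * pi * x = of_int k * (2 * pi)"
    by (auto simp: e2pi_def cis_eq_1_iff)
  then show "x \<in> \<int>"
    by simp
qed (auto elim: Ints_cases)

lemma e2pi_divide_eq_1_iff:
  assumes "0 < q"
  shows "e2pi (of_int a / real q) = 1 \<longleftrightarrow> int q dvd a"
proof
  assume "e2pi (of_int a / real q) = 1"
  then obtain k where "of_int a / real q = of_int k"
    by (auto simp: e2pi_eq_1_iff elim: Ints_cases)
  then have "of_int a = (of_int (int q * k) :: real)"
    using assms by (simp add: field_simps)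
  then show "int q dvd a"
    by (metis dvd_triv_left of_int_eq_iff)
qed (use assms in auto)

lemma e2pi_mod_divide:
  assumes "0 < q"
  shows "e2pi (of_int (a mod int q) / real q) = e2pi (of_int a / real q)"
proof -
  have "of_int (a mod int q) / real q = of_int a / real q - of_int (a div int q)"
    using assms by (simp add: minus_div_mult_eq_mod[symmetric] field_simps)
  then show ?thesis
    by simp
qed

lemma e2pi_diff_mod_pow2:
  "e2pi (of_int ((a - d) mod 2 ^ B) / 2 ^ B) = e2pi (of_int a / 2 ^ B) * e2pi (- (of_int d / 2 ^ B))"
  using e2pi_mod_divide[of "2 ^ B" "a - d"] by (simp add: diff_divide_distrib flip: e2pi_add)

lemma norm_e2pi_minus_1: "cmod (e2pi x - 1) = 2 * \<bar>sin (pi * x)\<bar>"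
proof -
  have "(cmod (e2pi x - 1))\<^sup>2 = (cos (2 * (pi * x)) - 1)\<^sup>2 + (sin (2 * (pi * x)))\<^sup>2"
    by (simp add: e2pi_def cmod_power2 mult_ac)
  also have "\<dots> = 4 * (sin (pi * x))\<^sup>2 * ((sin (pi * x))\<^sup>2 + (cos (pi * x))\<^sup>2)"
    unfolding cos_double_sin sin_double power2_eq_square by algebra
  also have "\<dots> = (2 * \<bar>sin (pi * x)\<bar>)\<^sup>2"
    using sin_cos_squared_add[of "pi * x"] by (simp add: power2_eq_square)
  finally show ?thesis
    by (rule power2_eq_imp_eq) simp_all
qed

lemma sum_int_atLeastLessThan: "(\<Sum>x\<in>{0..<int q}. f x) = (\<Sum>x<q. f (int x))"
proof -
  have "{0..<int q} = int ` {..<q}"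
    by (simp add: image_int_atLeastLessThan lessThan_atLeast0)
  then show ?thesis
    by (simp add: sum.reindex)
qed

lemma sum_e2pi_mult_divide:
  assumes "0 < q"
  shows "(\<Sum>x\<in>{0..<int q}. e2pi (of_int (x * a) / q)) = (if int q dvd a then of_nat q else 0)"
proof -
  define w where "w = e2pi (of_int a / q)"
  have "(\<Sum>x\<in>{0..<int q}. e2pi (of_int (x * a) / q)) = (\<Sum>x<q. w ^ x)"
    by (simp add: sum_int_atLeastLessThan w_def e2pi_power mult_ac)
  moreover have "w ^ q = 1"
    using assms by (simp add: w_def e2pi_power)
  ultimately show ?thesis
    using e2pi_divide_eq_1_iff[OF assms, of a] by (auto simp: w_def geometric_sum)
qed

lemma norm_sum_e2pi_geometric:
  fixes q L :: nat
  assumes "2 \<le> q"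
  shows "cmod (\<Sum>\<rho><L. e2pi (real \<rho> / q)) = \<bar>sin (pi * L / q)\<bar> / sin (pi / q)"
proof -
  define w where "w = e2pi (1 / q)"
  have "w \<noteq> 1"
    using e2pi_divide_eq_1_iff[of q 1] assms by (simp add: w_def)
  moreover have "(\<Sum>\<rho><L. e2pi (real \<rho> / q)) = (\<Sum>\<rho><L. w ^ \<rho>)"
    by (simp add: w_def e2pi_power)
  ultimately have "(\<Sum>\<rho><L. e2pi (real \<rho> / q)) = (w ^ L - 1) / (w - 1)"
    by (simp add: geometric_sum)
  moreover have "0 < sin (pi / q)"
    using assms by (intro sin_gt_zero) (auto simp: field_simps)
  ultimately show ?thesis
    by (simp add: norm_divide w_def e2pi_power norm_e2pi_minus_1)
qed

lemma sum_lessThan_mult_mod: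
  fixes f :: "nat \<Rightarrow> 'a::comm_semiring_1"
  shows "(\<Sum>r<a * L. f (r mod L)) = of_nat a * (\<Sum>\<rho><L. f \<rho>)"
proof -
  have "(\<Sum>r\<in>{m*L..<m*L+L}. f (r mod L)) = (\<Sum>\<rho><L. f \<rho>)" for m
  proof -
    have "(\<Sum>r\<in>{m*L..<m*L+L}. f (r mod L)) = (\<Sum>\<rho>\<in>{0..<L}. f ((\<rho> + m*L) mod L))"
      using sum.shift_bounds_nat_ivl[of "\<lambda>r. f (r mod L)" 0 "m*L" L] by (simp add: add.commute)
    then show ?thesis
      by (simp add: atLeast0LessThan)
  qed
  then show ?thesis
    by (simp flip: sum.nat_group)
qed

lemma sum_e2pi_mod_divide:
  assumes "q = Q * L"
  shows "(\<Sum>r\<in>{0..<int q}. e2pi (of_int (r mod int L) / q)) = of_nat Q * (\<Sum>\<rho><L. e2pi (real \<rho> / q))"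
proof -
  have "(\<Sum>r\<in>{0..<int q}. e2pi (of_int (r mod int L) / q)) = (\<Sum>r<q. e2pi (real (r mod L) / q))"
    by (simp add: sum_int_atLeastLessThan flip: of_nat_mod)
  also have "\<dots> = of_nat Q * (\<Sum>\<rho><L. e2pi (real \<rho> / q))"
    using sum_lessThan_mult_mod[where f = "\<lambda>\<rho>. e2pi (real \<rho> / q)" and a = Q and L = L]
    by (simp only: assms)
  finally show ?thesis .
qed

definition PiE_dflt :: "nat \<Rightarrow> (nat \<Rightarrow> 'a set) \<Rightarrow> 'a \<Rightarrow> (nat \<Rightarrow> 'a) set" where
  "PiE_dflt m V d = {x. \<forall>i. (i < m \<longrightarrow> x i \<in> V i) \<and> (\<not> i < m \<longrightarrow> x i = d)}"

lemma PiE_dflt_eq_image: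
  "PiE_dflt m V d = (\<lambda>f i. if i < m then f i else d) ` PiE {..<m} V"
proof
  show "PiE_dflt m V d \<subseteq> (\<lambda>f i. if i < m then f i else d) ` PiE {..<m} V"
  proof
    fix x assume x: "x \<in> PiE_dflt m V d"
    then have "x = (\<lambda>i. if i < m then restrict x {..<m} i else d)"
      by (auto simp: PiE_dflt_def)
    moreover have "restrict x {..<m} \<in> PiE {..<m} V"
      using x by (auto simp: PiE_dflt_def)
    ultimately show "x \<in> (\<lambda>f i. if i < m then f i else d) ` PiE {..<m} V"
      by (rule image_eqI)
  qed
  show "(\<lambda>f i. if i < m then f i else d) ` PiE {..<m} V \<subseteq> PiE_dflt m V d"
    unfolding PiE_dflt_def by (simp add: image_subset_iff PiE_mem)
qed

lemma inj_on_PiE_dflt_extension: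
  "inj_on (\<lambda>f i. if i < m then f i else d) (PiE {..<m} V)"
proof (rule inj_onI)
  fix f g assume "f \<in> PiE {..<m} V" "g \<in> PiE {..<m} V"
    and eq: "(\<lambda>i. if i < m then f i else d) = (\<lambda>i. if i < m then g i else d)"
  have "f i = g i" if "i < m" for i
    using fun_cong[OF eq, of i] that by simp
  with \<open>f \<in> PiE {..<m} V\<close> \<open>g \<in> PiE {..<m} V\<close> show "f = g"
    by (intro PiE_ext) auto
qed

lemma sum_PiE_dflt_prod:
  fixes f :: "nat \<Rightarrow> 'a \<Rightarrow> 'b::comm_semiring_1"
  assumes "\<And>i. i < m \<Longrightarrow> finite (V i)"
  shows "(\<Sum>x\<in>PiE_dflt m V d. \<Prod>i<m. f i (x i)) = (\<Prod>i<m. \<Sum>v\<in>V i. f i v)"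
proof -
  have "(\<Sum>x\<in>PiE_dflt m V d. \<Prod>i<m. f i (x i)) = (\<Sum>g\<in>PiE {..<m} V. \<Prod>i<m. f i (g i))"
    unfolding PiE_dflt_eq_image sum.reindex[OF inj_on_PiE_dflt_extension]
    by (intro sum.cong prod.cong) auto
  also have "\<dots> = (\<Prod>i<m. \<Sum>v\<in>V i. f i v)"
    by (rule prod_sum_PiE[symmetric]) (use assms in auto)
  finally show ?thesis .
qed

lemma finite_PiE_dflt: "(\<And>i. i < m \<Longrightarrow> finite (V i)) \<Longrightarrow> finite (PiE_dflt m V d)"
  unfolding PiE_dflt_eq_image by (intro finite_imageI finite_PiE) auto

lemma card_PiE_dflt: "(\<And>i. i < m \<Longrightarrow> finite (V i)) \<Longrightarrow> card (PiE_dflt m V d) = (\<Prod>i<m. card (V i))"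
  using sum_PiE_dflt_prod[of m V "\<lambda>_ _. 1::nat" d] by simp

lemma PiE_dflt_eqI:
  assumes "x \<in> PiE_dflt m V d" "y \<in> PiE_dflt m V d" "\<And>i. i < m \<Longrightarrow> x i = y i"
  shows "x = y"
proof
  fix i
  show "x i = y i"
    using assms by (cases "i < m") (auto simp: PiE_dflt_def)
qed

definition zvecs :: "nat \<Rightarrow> nat \<Rightarrow> (nat \<Rightarrow> int) set" where
  "zvecs n q = PiE_dflt n (\<lambda>_. {0..<int q}) 0"

lemma zmats_eq_PiE_dflt: "zmats m n q = PiE_dflt m (\<lambda>_. zvecs n q) (\<lambda>_. 0)"
  unfolding zmats_def zvecs_def PiE_dflt_def by (auto simp: fun_eq_iff)

lemma finite_zvecs [simp]: "finite (zvecs n q)"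
  by (simp add: zvecs_def finite_PiE_dflt)

lemma finite_zmats [simp]: "finite (zmats m n q)"
  by (simp add: zmats_eq_PiE_dflt finite_PiE_dflt)

lemma card_zvecs: "card (zvecs n q) = q ^ n"
  by (simp add: zvecs_def card_PiE_dflt)

lemma card_zmats: "card (zmats m n q) = q ^ (m * n)"
  by (simp add: zmats_eq_PiE_dflt card_PiE_dflt card_zvecs mult.commute flip: power_mult)

lemma zero_zmats [simp]: "0 < q \<Longrightarrow> (\<lambda>_ _. 0) \<in> zmats m n q"
  by (simp add: zmats_def)

lemma eq_if_dvd_diff_bounded:
  fixes a b :: int
  assumes "0 \<le> a" "a < q" "0 \<le> b" "b < q" "q dvd a - b"
  shows "a = b"
proof (rule ccontr)
  assume "a \<noteq> b"
  then have "\<bar>q\<bar> \<le> \<bar>a - b\<bar>"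
    using dvd_imp_le_int[of "a - b" q] assms by auto
  then show False
    using assms by auto
qed

lemma zvecs_eq_iff_dvd:
  assumes "u \<in> zvecs n q" "v \<in> zvecs n q"
  shows "u = v \<longleftrightarrow> (\<forall>j<n. int q dvd u j - v j)"
proof
  assume dvd: "\<forall>j<n. int q dvd u j - v j"
  have "u j \<in> {0..<int q}" "v j \<in> {0..<int q}" if "j < n" for j
    using assms that by (simp_all add: zvecs_def PiE_dflt_def)
  then have "u j = v j" if "j < n" for j
    using dvd that by (intro eq_if_dvd_diff_bounded[where q = "int q"]) auto
  with assms show "u = v"
    unfolding zvecs_def by (rule PiE_dflt_eqI)
qed simp

lemma zmats_eq_iff_dvd:
  assumes "U \<in> zmats m n q" "V \<in> zmats m n q"
  shows "U = V \<longleftrightarrow> (\<forall>i<m. \<forall>j<n. int q dvd U i j - V i j)"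
proof
  assume dvd: "\<forall>i<m. \<forall>j<n. int q dvd U i j - V i j"
  have "U i \<in> zvecs n q" "V i \<in> zvecs n q" if "i < m" for i
    using assms that by (simp_all add: zmats_eq_PiE_dflt PiE_dflt_def)
  then have "U i = V i" if "i < m" for i
    using dvd that zvecs_eq_iff_dvd by blast
  with assms show "U = V"
    unfolding zmats_eq_PiE_dflt by (rule PiE_dflt_eqI)
qed simp

section \<open>Fourier analysis on Z_q^n\<close>

definition dotp :: "nat \<Rightarrow> (nat \<Rightarrow> int) \<Rightarrow> (nat \<Rightarrow> int) \<Rightarrow> int" where
  "dotp n v w = (\<Sum>j<n. v j * w j)"

definition mat_inner :: "nat \<Rightarrow> nat \<Rightarrow> zmat \<Rightarrow> zmat \<Rightarrow> int" where
  "mat_inner m n X Y = (\<Sum>i<m. dotp n (X i) (Y i))"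

lemma dotp_commute: "dotp n v w = dotp n w v"
  by (simp add: dotp_def mult.commute)

lemma dotp_diff_right: "dotp n t (\<lambda>j. u j - v j) = dotp n t u - dotp n t v"
  by (simp add: dotp_def algebra_simps sum_subtractf)

lemma mat_inner_diff_right:
  "mat_inner m n K (\<lambda>a b. J a b - I a b) = mat_inner m n K J - mat_inner m n K I"
  by (simp add: mat_inner_def dotp_diff_right sum_subtractf)

lemma mat_inner_zero_right [simp]: "mat_inner m n X (\<lambda>_ _. 0) = 0"
  by (simp add: mat_inner_def dotp_def)

lemma prod_lessThan_if_const:
  fixes c :: "'a::comm_semiring_1"
  shows "(\<Prod>j<n. if P j then c else 0) = (if \<forall>j<n. P j then c ^ n else 0)"
  by (induction n) (auto simp: lessThan_Suc less_Suc_eq)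

lemma sum_zvecs_e2pi_dotp:
  assumes "0 < q"
  shows "(\<Sum>v\<in>zvecs n q. e2pi (of_int (dotp n v a) / q))
       = (if \<forall>j<n. int q dvd a j then of_nat q ^ n else 0)"
proof -
  have "(\<Sum>v\<in>zvecs n q. e2pi (of_int (dotp n v a) / q))
      = (\<Sum>v\<in>zvecs n q. \<Prod>j<n. e2pi (of_int (v j * a j) / q))"
    unfolding dotp_def e2pi_sum_divide ..
  also have "\<dots> = (\<Prod>j<n. \<Sum>x\<in>{0..<int q}. e2pi (of_int (x * a j) / q))"
    unfolding zvecs_def by (rule sum_PiE_dflt_prod) simp
  also have "\<dots> = (\<Prod>j<n. if int q dvd a j then of_nat q else 0)"
    by (intro prod.cong refl) (rule sum_e2pi_mult_divide[OF assms])
  finally show ?thesis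
    by (simp add: prod_lessThan_if_const)
qed

lemma sum_zmats_e2pi_mat_inner:
  assumes "0 < q"
  shows "(\<Sum>X\<in>zmats m n q. e2pi (of_int (mat_inner m n X A) / q))
       = (if \<forall>i<m. \<forall>j<n. int q dvd A i j then of_nat q ^ (m * n) else 0)"
proof -
  have "(\<Sum>X\<in>zmats m n q. e2pi (of_int (mat_inner m n X A) / q))
      = (\<Sum>X\<in>zmats m n q. \<Prod>i<m. e2pi (of_int (dotp n (X i) (A i)) / q))"
    unfolding mat_inner_def e2pi_sum_divide ..
  also have "\<dots> = (\<Prod>i<m. \<Sum>v\<in>zvecs n q. e2pi (of_int (dotp n v (A i)) / q))"
    unfolding zmats_eq_PiE_dflt by (rule sum_PiE_dflt_prod) simp
  also have "\<dots> = (\<Prod>i<m. if \<forall>j<n. int q dvd A i j then of_nat q ^ n else 0)"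
    using assms by (simp add: sum_zvecs_e2pi_dotp)
  finally show ?thesis
    by (auto simp: prod_lessThan_if_const mult.commute simp flip: power_mult)
qed

lemma sum_zvecs_e2pi_dotp_diff:
  assumes "0 < q" "u \<in> zvecs n q" "v \<in> zvecs n q"
  shows "(\<Sum>t\<in>zvecs n q. e2pi (of_int (dotp n t (\<lambda>j. u j - v j)) / q))
       = (if u = v then of_nat q ^ n else 0)"
  using assms by (simp add: sum_zvecs_e2pi_dotp zvecs_eq_iff_dvd)

lemma sum_zmats_e2pi_mat_inner_diff:
  assumes "0 < q" "I \<in> zmats m n q" "J \<in> zmats m n q"
  shows "(\<Sum>K\<in>zmats m n q. e2pi (of_int (mat_inner m n K (\<lambda>a b. J a b - I a b)) / q))
       = (if I = J then of_nat q ^ (m * n) else 0)"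
  using assms zmats_eq_iff_dvd[OF assms(3,2)] by (simp add: sum_zmats_e2pi_mat_inner eq_commute)

definition fourier_coeff :: "nat \<Rightarrow> nat \<Rightarrow> ((nat \<Rightarrow> int) \<Rightarrow> complex) \<Rightarrow> (nat \<Rightarrow> int) \<Rightarrow> complex" where
  "fourier_coeff q n \<phi> t = (\<Sum>v\<in>zvecs n q. e2pi (of_int (- dotp n v t) / q) * \<phi> v) / of_nat q ^ n"

lemma fourier_sum_mult_cnj:
  "(\<Sum>v\<in>V. e2pi (of_int (- dotp n v t) / q) * \<phi> v)
   * cnj (\<Sum>u\<in>V. e2pi (of_int (- dotp n u t) / q) * \<phi> u)
 = (\<Sum>v\<in>V. \<Sum>u\<in>V. \<phi> v * cnj (\<phi> u) * e2pi (of_int (dotp n t (\<lambda>j. u j - v j)) / q))"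
proof -
  have pair: "e2pi (of_int (- dotp n v t) / q) * e2pi (of_int (dotp n u t) / q)
      = e2pi (of_int (dotp n t (\<lambda>j. u j - v j)) / q)" for u v
    by (simp add: dotp_diff_right dotp_commute[of n t] diff_divide_distrib flip: e2pi_add)
  have "(\<Sum>v\<in>V. e2pi (of_int (- dotp n v t) / q) * \<phi> v)
      * cnj (\<Sum>u\<in>V. e2pi (of_int (- dotp n u t) / q) * \<phi> u)
      = (\<Sum>v\<in>V. \<Sum>u\<in>V.
          (e2pi (of_int (- dotp n v t) / q) * \<phi> v) * (e2pi (of_int (dotp n u t) / q) * cnj (\<phi> u)))"
    unfolding cnj_sum sum_product by (simp add: cnj_e2pi)
  also have "\<dots> = (\<Sum>v\<in>V. \<Sum>u\<in>V.
      \<phi> v * cnj (\<phi> u) * (e2pi (of_int (- dotp n v t) / q) * e2pi (of_int (dotp n u t) / q)))"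
    by (simp add: mult_ac)
  finally show ?thesis
    by (simp only: pair)
qed

theorem Parseval:
  assumes "0 < q"
  shows "(\<Sum>t\<in>zvecs n q. (cmod (fourier_coeff q n \<phi> t))\<^sup>2)
       = (\<Sum>v\<in>zvecs n q. (cmod (\<phi> v))\<^sup>2) / real q ^ n"
proof -
  let ?Z = "zvecs n q"
  define F where "F t = (\<Sum>v\<in>?Z. e2pi (of_int (- dotp n v t) / q) * \<phi> v)" for t
  have "(\<Sum>t\<in>?Z. F t * cnj (F t)) = (\<Sum>v\<in>?Z. \<Sum>t\<in>?Z. \<Sum>u\<in>?Z.
          \<phi> v * cnj (\<phi> u) * e2pi (of_int (dotp n t (\<lambda>j. u j - v j)) / q))"
    unfolding F_def fourier_sum_mult_cnj by (rule sum.swap)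
  also have "\<dots> = (\<Sum>v\<in>?Z. \<Sum>u\<in>?Z.
          \<phi> v * cnj (\<phi> u) * (\<Sum>t\<in>?Z. e2pi (of_int (dotp n t (\<lambda>j. u j - v j)) / q)))"
    unfolding sum_distrib_left by (intro sum.cong refl sum.swap)
  also have "\<dots> = (\<Sum>v\<in>?Z. \<Sum>u\<in>?Z. if u = v then \<phi> v * cnj (\<phi> v) * of_nat q ^ n else 0)"
    using assms by (intro sum.cong refl) (simp add: sum_zvecs_e2pi_dotp_diff)
  also have "\<dots> = of_nat q ^ n * (\<Sum>v\<in>?Z. \<phi> v * cnj (\<phi> v))"
    by (simp add: sum_distrib_left mult.commute)
  finally have sum_F: "(\<Sum>t\<in>?Z. F t * cnj (F t)) = of_nat q ^ n * (\<Sum>v\<in>?Z. \<phi> v * cnj (\<phi> v))" .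
  have "complex_of_real ((cmod (fourier_coeff q n \<phi> t))\<^sup>2) = F t * cnj (F t) / (of_nat q ^ n)\<^sup>2" for t
    unfolding complex_norm_square fourier_coeff_def F_def[symmetric] by (simp add: power2_eq_square)
  then have "complex_of_real (\<Sum>t\<in>?Z. (cmod (fourier_coeff q n \<phi> t))\<^sup>2)
      = (\<Sum>t\<in>?Z. F t * cnj (F t)) / (of_nat q ^ n)\<^sup>2"
    by (simp add: sum_divide_distrib)
  also have "\<dots> = (\<Sum>v\<in>?Z. \<phi> v * cnj (\<phi> v)) / of_nat q ^ n"
    using assms by (simp add: sum_F power2_eq_square)
  also have "\<dots> = complex_of_real ((\<Sum>v\<in>?Z. (cmod (\<phi> v))\<^sup>2) / real q ^ n)"
    by (simp add: of_real_sum flip: complex_norm_square)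
  finally show ?thesis
    by (simp only: of_real_eq_iff)
qed

lemma prod_fourier_coeff:
  "(\<Prod>k<m. fourier_coeff q n (\<phi> k) (Y k))
 = (\<Sum>X\<in>zmats m n q. e2pi (of_int (- mat_inner m n Y X) / q) * (\<Prod>k<m. \<phi> k (X k)))
     / of_nat q ^ (m * n)"
proof -
  let ?c = "of_nat q ^ n :: complex"
  have "(\<Prod>k<m. fourier_coeff q n (\<phi> k) (Y k))
      = (\<Prod>k<m. \<Sum>v\<in>zvecs n q. e2pi (of_int (- dotp n v (Y k)) / q) * \<phi> k v / ?c)"
    unfolding fourier_coeff_def by (simp add: sum_divide_distrib)
  also have "\<dots> = (\<Sum>X\<in>zmats m n q. \<Prod>k<m. e2pi (of_int (- dotp n (X k) (Y k)) / q) * \<phi> k (X k) / ?c)"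
    unfolding zmats_eq_PiE_dflt by (rule sum_PiE_dflt_prod[symmetric]) simp
  also have "\<dots> = (\<Sum>X\<in>zmats m n q.
      e2pi (of_int (- mat_inner m n Y X) / q) * (\<Prod>k<m. \<phi> k (X k)) / ?c ^ m)"
  proof (rule sum.cong[OF refl])
    fix X
    have "- mat_inner m n Y X = (\<Sum>k<m. - dotp n (X k) (Y k))"
      by (simp add: mat_inner_def sum_negf dotp_commute)
    then show "(\<Prod>k<m. e2pi (of_int (- dotp n (X k) (Y k)) / q) * \<phi> k (X k) / ?c)
        = e2pi (of_int (- mat_inner m n Y X) / q) * (\<Prod>k<m. \<phi> k (X k)) / ?c ^ m"
      by (simp only: e2pi_sum_divide prod.distrib prod_dividef) simp
  qed
  finally show ?thesis
    by (simp add: sum_divide_distrib mult.commute flip: power_mult)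
qed

lemma sum_affine_mod_reindex:
  fixes u x :: int and g :: "int \<Rightarrow> 'a::comm_monoid_add"
  assumes "coprime (int q) u"
  shows "(\<Sum>j\<in>{0..<int q}. g ((x + j * u) mod int q)) = (\<Sum>r\<in>{0..<int q}. g r)"
proof -
  let ?f = "\<lambda>j. (x + j * u) mod int q"
  have inj: "inj_on ?f {0..<int q}"
  proof (rule inj_onI)
    fix j j' assume j: "j \<in> {0..<int q}" "j' \<in> {0..<int q}" and eq: "?f j = ?f j'"
    have "int q dvd (j - j') * u"
      using eq by (simp add: mod_eq_dvd_iff algebra_simps)
    then have "int q dvd j - j'"
      using coprime_dvd_mult_left_iff[OF assms] by simp
    then show "j = j'"
      using j by (intro eq_if_dvd_diff_bounded[where q = "int q"]) auto
  qed
  moreover have "?f ` {0..<int q} = {0..<int q}"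
    by (rule endo_inj_surj) (use inj in auto)
  ultimately show ?thesis
    using sum.reindex[OF inj, of g] by simp
qed

lemma dotp_fun_upd:
  assumes "i < n"
  shows "dotp n (v(i := w)) s = dotp n v s - v i * s i + w * s i"
proof -
  have "dotp n (v(i := w)) s = (\<Sum>j<n. v j * s j + (if j = i then (w - v i) * s i else 0))"
    unfolding dotp_def by (intro sum.cong refl) (auto simp: algebra_simps)
  then show ?thesis
    using assms by (simp add: sum.distrib dotp_def algebra_simps)
qed

lemma sum_zvecs_shift_coordinate:
  fixes H :: "int \<Rightarrow> 'a::comm_monoid_add"
  assumes "0 < q" and H: "\<And>y y'. y mod int q = y' mod int q \<Longrightarrow> H y = H y'" and "i < n"
  shows "(\<Sum>v\<in>zvecs n q. H (dotp n v s + j * s i)) = (\<Sum>v\<in>zvecs n q. H (dotp n v s))"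
proof (rule sum.reindex_bij_witness[where i = "\<lambda>v. v(i := (v i - j) mod int q)"
      and j = "\<lambda>v. v(i := (v i + j) mod int q)"])
  fix v assume v: "v \<in> zvecs n q"
  then have "0 \<le> v i" "v i < int q"
    using \<open>i < n\<close> by (auto simp: zvecs_def PiE_dflt_def)
  then show "(v(i := (v i + j) mod int q))(i := ((v(i := (v i + j) mod int q)) i - j) mod int q) = v"
    and "(v(i := (v i - j) mod int q))(i := ((v(i := (v i - j) mod int q)) i + j) mod int q) = v"
    by (simp_all add: mod_diff_left_eq mod_add_left_eq)
  show "v(i := (v i + j) mod int q) \<in> zvecs n q" "v(i := (v i - j) mod int q) \<in> zvecs n q"
    using v assms by (auto simp: zvecs_def PiE_dflt_def)
  have "dotp n (v(i := (v i + j) mod int q)) s = dotp n v s - v i * s i + (v i + j) mod int q * s i"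
    using \<open>i < n\<close> by (rule dotp_fun_upd)
  also have "\<dots> mod int q = (dotp n v s - v i * s i + (v i + j) * s i) mod int q"
    by (metis mod_add_right_eq mod_mult_left_eq)
  also have "dotp n v s - v i * s i + (v i + j) * s i = dotp n v s + j * s i"
    by (simp add: algebra_simps)
  finally have "dotp n (v(i := (v i + j) mod int q)) s mod int q = (dotp n v s + j * s i) mod int q" .
  then show "H (dotp n (v(i := (v i + j) mod int q)) s) = H (dotp n v s + j * s i)"
    by (rule H)
qed

(* Shifting v_i by j shifts v . s by j s_i; as s_i is a unit mod q, j s_i runs through all
   residues. *)
lemma sum_zvecs_dotp_equidistributed:
  fixes H :: "int \<Rightarrow> 'a::comm_semiring_1"
  assumes "0 < q" and H: "\<And>y y'. y mod int q = y' mod int q \<Longrightarrow> H y = H y'"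
    and "i < n" and "coprime (int q) (s i)"
  shows "of_nat q * (\<Sum>v\<in>zvecs n q. H (dotp n v s)) = of_nat q ^ n * (\<Sum>r\<in>{0..<int q}. H r)"
proof -
  have "of_nat q * (\<Sum>v\<in>zvecs n q. H (dotp n v s))
      = (\<Sum>j\<in>{0..<int q}. \<Sum>v\<in>zvecs n q. H (dotp n v s + j * s i))"
    using sum_zvecs_shift_coordinate[where H = H, OF assms(1) H assms(3)] by simp
  also have "\<dots> = (\<Sum>v\<in>zvecs n q. \<Sum>j\<in>{0..<int q}. H ((dotp n v s + j * s i) mod int q))"
    by (subst sum.swap) (intro sum.cong refl H, simp)
  also have "\<dots> = (\<Sum>v\<in>zvecs n q. \<Sum>r\<in>{0..<int q}. H r)"
    using assms(4) by (intro sum.cong refl sum_affine_mod_reindex)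
  also have "\<dots> = of_nat q ^ n * (\<Sum>r\<in>{0..<int q}. H r)"
    by (simp add: card_zvecs)
  finally show ?thesis .
qed

section \<open>The Fourier coefficient of the decryption phase\<close>

lemma Jordan_inequality:
  fixes z :: real
  assumes "0 \<le> z" "z \<le> pi / 2"
  shows "2 * z / pi \<le> sin z"
proof -
  have "concave_on {0..pi/2} sin"
    by (rule f''_le0_imp_concave[where f' = cos and f''="\<lambda>x. - sin x"])
       (auto intro!: derivative_eq_intros simp: sin_ge_zero)
  then have cv: "convex_on {0..pi/2} (\<lambda>x. - sin x)"
    by (simp add: concave_on_def)
  define t where "t = 2 * z / pi"
  have t: "0 \<le> t" "t \<le> 1"
    using assms pi_gt_zero by (auto simp: t_def field_simps)
  have "- sin ((1 - t) *\<^sub>R 0 + t *\<^sub>R (pi/2)) \<le> (1 - t) * (- sin 0) + t * (- sin (pi/2))"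
    by (rule convex_onD[OF cv]) (use t pi_gt_zero in auto)
  moreover have "t * (pi/2) = z"
    using pi_gt_zero by (simp add: t_def)
  ultimately show ?thesis
    by (simp add: t_def)
qed

lemma sin_ratio_ge_two_div_pi:
  fixes Q q :: real
  assumes "2 \<le> Q" "1 < q"
  shows "2 / pi \<le> Q * sin (pi / Q) / (q * sin (pi / q))"
proof -
  have "2 / Q \<le> sin (pi / Q)"
    using Jordan_inequality[of "pi / Q"] assms by (simp add: field_simps)
  then have num: "2 \<le> Q * sin (pi / Q)"
    using assms by (simp add: field_simps)
  have "0 < sin (pi / q)"
    using assms by (intro sin_gt_zero) (auto simp: field_simps)
  moreover have "sin (pi / q) \<le> pi / q"
    using assms by (intro sin_x_le_x) simp
  ultimately have den: "0 < q * sin (pi / q)" "q * sin (pi / q) \<le> pi"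
    using assms by (auto simp: field_simps)
  have "0 \<le> Q * sin (pi / Q)"
    using num by linarith
  from frac_le[OF this num den] show ?thesis .
qed

(* The phase that a decryption query with C2 = 0 kicks back onto a row v of C1,
   when s is the column of S that is decrypted. *)
definition dec_phase :: "nat \<Rightarrow> nat \<Rightarrow> nat \<Rightarrow> (nat \<Rightarrow> int) \<Rightarrow> (nat \<Rightarrow> int) \<Rightarrow> complex" where
  "dec_phase n q B s v = e2pi (- (of_int (((- dotp n v s) mod int q) div int (q div 2 ^ B)) / 2 ^ B))"

lemma norm_dec_phase [simp]: "norm (dec_phase n q B s v) = 1"
  by (simp add: dec_phase_def)

(* With y mod q = L b + c and 0 <= c < L: y/q - b/Q = y div q + c/q. *)
lemma e2pi_split_mod_div:
  fixes y :: int and Q L q :: nat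
  assumes "q = Q * L" "0 < Q" "0 < L"
  shows "e2pi (of_int y / q) * e2pi (- (of_int ((y mod int q) div int L) / Q))
       = e2pi (of_int ((y mod int q) mod int L) / q)"
proof -
  define m where "m = y mod int q"
  have m: "m = y - int q * (y div int q)" "m mod int L = m - int L * (m div int L)"
    by (simp_all add: m_def minus_div_mult_eq_mod[symmetric] mult.commute)
  have "of_int (m mod int L) / real q
      = of_int y / q + - (of_int (m div int L) / Q) + of_int (- (y div int q))"
    using assms unfolding m(2) by (simp add: m(1) field_simps)
  then have "e2pi (of_int (m mod int L) / q) = e2pi (of_int y / q + - (of_int (m div int L) / Q))"
    by (simp only: e2pi_add_of_int)
  then show ?thesis
    by (simp only: m_def e2pi_add)
qed

lemma fourier_coeff_dec_phase:
  assumes q: "q = 2 ^ B * L" and "0 < L" "i < n" "coprime (int q) (s i)"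
  shows "fourier_coeff q n (dec_phase n q B s) s = (\<Sum>\<rho><L. e2pi (real \<rho> / q)) / of_nat L"
proof -
  define H where "H y = e2pi (of_int (((- y) mod int q) mod int L) / q)" for y
  have "q div 2 ^ B = L"
    using q by simp
  then have kick: "e2pi (of_int (- dotp n v s) / q) * dec_phase n q B s v = H (dotp n v s)" for v
    unfolding dec_phase_def H_def using e2pi_split_mod_div[OF q _ \<open>0 < L\<close>, of "- dotp n v s"] by simp
  have H_periodic: "H y = H y'" if "y mod int q = y' mod int q" for y y'
    unfolding H_def using mod_minus_cong[OF that] by simp
  have "0 < q"
    using q \<open>0 < L\<close> by simp
  have "(\<Sum>r\<in>{0..<int q}. H r)
      = (\<Sum>j\<in>{0..<int q}. e2pi (of_int (((0 + j * (- 1)) mod int q) mod int L) / q))"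
    by (simp add: H_def)
  also have "\<dots> = of_nat (2 ^ B) * (\<Sum>\<rho><L. e2pi (real \<rho> / q))"
    using sum_affine_mod_reindex[of q "- 1" "\<lambda>r. e2pi (of_int (r mod int L) / q)" 0]
    by (simp only: coprime_minus_right_iff coprime_1_right simp_thms sum_e2pi_mod_divide[OF q])
  finally have sum_H: "(\<Sum>r\<in>{0..<int q}. H r) = of_nat (2 ^ B) * (\<Sum>\<rho><L. e2pi (real \<rho> / q))" .
  have equi: "of_nat q * (\<Sum>v\<in>zvecs n q. H (dotp n v s)) = of_nat q ^ n * (\<Sum>r\<in>{0..<int q}. H r)"
    using \<open>0 < q\<close> H_periodic assms(3,4) by (rule sum_zvecs_dotp_equidistributed)
  have "fourier_coeff q n (dec_phase n q B s) s = (\<Sum>v\<in>zvecs n q. H (dotp n v s)) / of_nat q ^ n"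
    unfolding fourier_coeff_def kick ..
  also have "\<dots> = (\<Sum>r\<in>{0..<int q}. H r) / of_nat q"
    using equi \<open>0 < q\<close> by (simp add: field_simps)
  also have "\<dots> = (\<Sum>\<rho><L. e2pi (real \<rho> / q)) / of_nat L"
    unfolding sum_H using q by simp
  finally show ?thesis .
qed

lemma norm_fourier_coeff_dec_phase_ge:
  assumes q: "q = 2 ^ D" and "1 \<le> B" "B \<le> D" "i < n" "odd (s i)"
  shows "2 / pi \<le> cmod (fourier_coeff q n (dec_phase n q B s) s)"
proof -
  define L :: nat where "L = 2 ^ (D - B)"
  have qL: "q = 2 ^ B * L"
    using assms by (simp add: L_def flip: power_add)
  have Q: "(2::real) \<le> 2 ^ B"
    using power_increasing[of 1 B "2::real"] \<open>1 \<le> B\<close> by simp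
  have "2 \<le> q"
    using power_increasing[of 1 D "2::nat"] assms by simp
  have "coprime (int q) (s i)"
    using q \<open>odd (s i)\<close> by simp
  then have "fourier_coeff q n (dec_phase n q B s) s = (\<Sum>\<rho><L. e2pi (real \<rho> / q)) / of_nat L"
    using qL \<open>i < n\<close> by (intro fourier_coeff_dec_phase) (simp_all add: L_def)
  then have "cmod (fourier_coeff q n (dec_phase n q B s) s) = \<bar>sin (pi * L / q)\<bar> / sin (pi / q) / L"
    by (simp add: norm_divide norm_sum_e2pi_geometric[OF \<open>2 \<le> q\<close>])
  also have "pi * L / q = pi / 2 ^ B"
    using qL by (simp add: L_def)
  also have "\<bar>sin (pi / 2 ^ B)\<bar> = sin (pi / 2 ^ B)"
    using Q by (intro abs_of_nonneg sin_ge_zero) (auto simp: field_simps)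
  also have "sin (pi / 2 ^ B) / sin (pi / q) / L = 2 ^ B * sin (pi / 2 ^ B) / (q * sin (pi / q))"
    using qL by (simp add: L_def field_simps)
  finally have "cmod (fourier_coeff q n (dec_phase n q B s) s)
      = 2 ^ B * sin (pi / 2 ^ B) / (q * sin (pi / q))" .
  moreover have "2 / pi \<le> 2 ^ B * sin (pi / 2 ^ B) / (q * sin (pi / q))"
    using Q \<open>2 \<le> q\<close> sin_ratio_ge_two_div_pi[of "2 ^ B" q] by simp
  ultimately show ?thesis
    by simp
qed

definition tensor_op :: "('a \<Rightarrow> 'a \<Rightarrow> complex) \<Rightarrow> ('b \<Rightarrow> 'b \<Rightarrow> complex) \<Rightarrow> 'a \<times> 'b \<Rightarrow> 'a \<times> 'b \<Rightarrow> complex" where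
  "tensor_op A B x y = A (fst x) (fst y) * B (snd x) (snd y)"

definition id_op :: "'a \<Rightarrow> 'a \<Rightarrow> complex" where
  "id_op x y = (if x = y then 1 else 0)"

lemma unitary_on_tensor_op:
  assumes "unitary_on A UA" "unitary_on B UB"
  shows "unitary_on (A \<times> B) (tensor_op UA UB)"
  unfolding unitary_on_def
proof (intro ballI)
  fix i j assume i: "i \<in> A \<times> B" and j: "j \<in> A \<times> B"
  have "(\<Sum>k\<in>A \<times> B. cnj (tensor_op UA UB k i) * tensor_op UA UB k j)
      = (\<Sum>ka\<in>A. cnj (UA ka (fst i)) * UA ka (fst j)) * (\<Sum>kb\<in>B. cnj (UB kb (snd i)) * UB kb (snd j))"
    unfolding tensor_op_def sum_product
    by (subst sum.cartesian_product) (simp add: split_def mult_ac)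
  also have "\<dots> = (if i = j then 1 else 0)"
    using assms i j unfolding unitary_on_def by (auto simp: prod_eq_iff)
  finally show "(\<Sum>k\<in>A \<times> B. cnj (tensor_op UA UB k i) * tensor_op UA UB k j)
      = (if i = j then 1 else 0)" .
qed

lemma unitary_on_id_op: "finite A \<Longrightarrow> unitary_on A id_op"
  unfolding unitary_on_def
proof (intro ballI)
  fix i j assume "finite A" "i \<in> A" "j \<in> A"
  have summand: "(\<lambda>k. cnj (id_op k i) * id_op k j)
      = (\<lambda>k. if k = i then (if i = j then 1 else 0) else 0)"
    by (auto simp: id_op_def)
  show "(\<Sum>k\<in>A. cnj (id_op k i) * id_op k j) = (if i = j then 1 else 0)"
    unfolding summand using \<open>finite A\<close> \<open>i \<in> A\<close> by simp
qed

lemma apply_op_ket: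
  assumes "finite D" "x \<in> D"
  shows "apply_op D U (ket x) = (\<lambda>y. U y x)"
  using assms by (simp add: apply_op_def ket_def if_distrib[of "\<lambda>c. _ * c"] cong: if_cong)

lemma apply_op_tensor_op_id_op:
  assumes "finite A" "finite B" "b \<in> B"
  shows "apply_op (A \<times> B) (tensor_op U id_op) \<psi> (a, b) = (\<Sum>a'\<in>A. U a a' * \<psi> (a', b))"
proof -
  have "apply_op (A \<times> B) (tensor_op U id_op) \<psi> (a, b)
      = (\<Sum>a'\<in>A. \<Sum>b'\<in>B. if b' = b then U a a' * \<psi> (a', b') else 0)"
    unfolding apply_op_def tensor_op_def id_op_def
    by (subst sum.cartesian_product) (auto intro!: sum.cong)
  then show ?thesis
    using assms by simp
qed

definition qft :: "nat \<Rightarrow> nat \<Rightarrow> nat \<Rightarrow> int \<Rightarrow> zmat \<Rightarrow> zmat \<Rightarrow> complex" where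
  "qft m n q \<sigma> Y X
     = complex_of_real (1 / sqrt (real q ^ (m * n))) * e2pi (of_int (\<sigma> * mat_inner m n Y X) / q)"

lemma unitary_on_qft:
  assumes "0 < q" "\<sigma> = 1 \<or> \<sigma> = -1"
  shows "unitary_on (zmats m n q) (qft m n q \<sigma>)"
  unfolding unitary_on_def
proof (intro ballI)
  fix I J assume I: "I \<in> zmats m n q" and J: "J \<in> zmats m n q"
  let ?c = "complex_of_real (1 / real q ^ (m * n))"
  have cnj_qft: "cnj (qft m n q \<sigma> K I) * qft m n q \<sigma> K J
      = ?c * e2pi (of_int (\<sigma> * (mat_inner m n K J - mat_inner m n K I)) / q)" for K
    using \<open>0 < q\<close>
    by (simp add: qft_def cnj_e2pi algebra_simps diff_divide_distrib flip: e2pi_add of_real_mult)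
  have sum_e2pi: "(\<Sum>K\<in>zmats m n q. e2pi (of_int (\<sigma> * (mat_inner m n K J - mat_inner m n K I)) / q))
      = (if I = J then of_nat q ^ (m * n) else 0)"
    using assms(2)
  proof
    assume "\<sigma> = 1"
    then show ?thesis
      using sum_zmats_e2pi_mat_inner_diff[OF \<open>0 < q\<close> I J] by (simp add: mat_inner_diff_right)
  next
    assume "\<sigma> = -1"
    then show ?thesis
      using sum_zmats_e2pi_mat_inner_diff[OF \<open>0 < q\<close> J I] by (simp add: mat_inner_diff_right eq_commute)
  qed
  have "(\<Sum>K\<in>zmats m n q. cnj (qft m n q \<sigma> K I) * qft m n q \<sigma> K J)
      = ?c * (\<Sum>K\<in>zmats m n q. e2pi (of_int (\<sigma> * (mat_inner m n K J - mat_inner m n K I)) / q))"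
    unfolding cnj_qft by (rule sum_distrib_left[symmetric])
  also have "\<dots> = (if I = J then 1 else 0)"
    unfolding sum_e2pi using \<open>0 < q\<close> by simp
  finally show "(\<Sum>K\<in>zmats m n q. cnj (qft m n q \<sigma> K I) * qft m n q \<sigma> K J)
      = (if I = J then 1 else 0)" .
qed

definition frodo_oracle_inv :: "nat \<Rightarrow> nat \<Rightarrow> nat \<Rightarrow> nat \<Rightarrow> nat \<Rightarrow> zmat \<Rightarrow> frodo_basis \<Rightarrow> frodo_basis" where
  "frodo_oracle_inv n mb nb q B S x = (case x of (C1, C2, z, w) \<Rightarrow>
     (C1, C2, (\<lambda>i j. if i < mb \<and> j < nb then (z i j - frodo_dec n q B S C1 C2 i j) mod 2 ^ B
                     else z i j), w))"

lemma eq_add_mod_iff: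
  fixes a b d M :: int
  assumes "0 \<le> a" "a < M" "0 \<le> b" "b < M"
  shows "a = (b + d) mod M \<longleftrightarrow> b = (a - d) mod M"
proof
  assume "a = (b + d) mod M"
  then show "b = (a - d) mod M"
    using assms by (simp add: mod_diff_left_eq)
next
  assume "b = (a - d) mod M"
  then show "a = (b + d) mod M"
    using assms by (simp add: mod_add_left_eq)
qed

lemma finite_qspace: "finite W \<Longrightarrow> finite (qspace n mb nb q B W)"
  by (simp add: qspace_def)

lemma frodo_oracle_inv_mem:
  "x \<in> qspace n mb nb q B W \<Longrightarrow> frodo_oracle_inv n mb nb q B S x \<in> qspace n mb nb q B W"
  by (auto simp: frodo_oracle_inv_def qspace_def zmats_def split: prod.splits)

lemma frodo_oracle_map_eq_iff:
  assumes "x \<in> qspace n mb nb q B W" "y \<in> qspace n mb nb q B W"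
  shows "x = frodo_oracle_map n mb nb q B S y \<longleftrightarrow> y = frodo_oracle_inv n mb nb q B S x"
proof -
  obtain C1 C2 z w where x: "x = (C1, C2, z, w)"
    by (cases x) auto
  obtain C1' C2' z' w' where y: "y = (C1', C2', z', w')"
    by (cases y) auto
  have z: "z \<in> zmats mb nb (2 ^ B)" "z' \<in> zmats mb nb (2 ^ B)"
    using assms by (auto simp: x y qspace_def)
  have entry: "z i j = (if i < mb \<and> j < nb then (z' i j + d i j) mod 2 ^ B else z' i j)
      \<longleftrightarrow> z' i j = (if i < mb \<and> j < nb then (z i j - d i j) mod 2 ^ B else z i j)" for d i j
    using z by (cases "i < mb \<and> j < nb") (auto simp: zmats_def eq_add_mod_iff)
  have "z = (\<lambda>i j. if i < mb \<and> j < nb then (z' i j + d i j) mod 2 ^ B else z' i j)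
      \<longleftrightarrow> z' = (\<lambda>i j. if i < mb \<and> j < nb then (z i j - d i j) mod 2 ^ B else z i j)" for d
    unfolding fun_eq_iff using entry by blast
  then show ?thesis
    unfolding x y frodo_oracle_map_def frodo_oracle_inv_def by auto
qed

lemma apply_frodo_oracle:
  assumes "finite W" "x \<in> qspace n mb nb q B W"
  shows "apply_op (qspace n mb nb q B W) (frodo_oracle n mb nb q B S) \<psi> x
       = \<psi> (frodo_oracle_inv n mb nb q B S x)"
proof -
  have "apply_op (qspace n mb nb q B W) (frodo_oracle n mb nb q B S) \<psi> x
      = (\<Sum>y\<in>qspace n mb nb q B W. if y = frodo_oracle_inv n mb nb q B S x then \<psi> y else 0)"
    unfolding apply_op_def frodo_oracle_def
    using frodo_oracle_map_eq_iff[OF assms(2)] by (intro sum.cong) auto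
  then show ?thesis
    using assms frodo_oracle_inv_mem finite_qspace by simp
qed

section \<open>The attack\<close>

definition mat_col :: "zmat \<Rightarrow> nat \<Rightarrow> nat \<Rightarrow> int" where
  "mat_col S j = (\<lambda>i. S i j)"

lemma mat_col_zvecs: "S \<in> zmats n nb q \<Longrightarrow> j < nb \<Longrightarrow> mat_col S j \<in> zvecs n q"
  by (auto simp: mat_col_def zvecs_def PiE_dflt_def zmats_def)

lemma dec_phase_mat_col:
  "dec_phase n q B (mat_col S j) (X i)
 = e2pi (- (of_int (frodo_dec n q B S X (\<lambda>_ _. 0) i j) / 2 ^ B))"
  by (simp add: dec_phase_def frodo_dec_def dotp_def mat_col_def)

definition chosen_positions :: "nat \<Rightarrow> nat \<Rightarrow> (nat \<Rightarrow> nat) \<Rightarrow> zmat" where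
  "chosen_positions mb nb cols = (\<lambda>i j. if i < mb \<and> j < nb \<and> j = cols i then 1 else 0)"

lemma chosen_positions_zmats: "1 \<le> B \<Longrightarrow> chosen_positions mb nb cols \<in> zmats mb nb (2 ^ B)"
  using power_increasing[of 1 B "2::int"] by (auto simp: chosen_positions_def zmats_def)

lemma mat_inner_chosen_positions:
  assumes "\<forall>k<mb. cols k < nb"
  shows "mat_inner mb nb Z (chosen_positions mb nb cols) = (\<Sum>k<mb. Z k (cols k))"
  unfolding mat_inner_def dotp_def chosen_positions_def
  using assms by (intro sum.cong refl) (simp add: if_distrib[of "\<lambda>c. _ * c"] cong: if_cong)

definition attack_init :: "nat \<Rightarrow> nat \<Rightarrow> (nat \<Rightarrow> nat) \<Rightarrow> frodo_basis" where
  "attack_init mb nb cols = ((\<lambda>_ _. 0), (\<lambda>_ _. 0), chosen_positions mb nb cols, 0)"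

definition attack_U1 :: "nat \<Rightarrow> nat \<Rightarrow> nat \<Rightarrow> nat \<Rightarrow> nat \<Rightarrow> frodo_basis \<Rightarrow> frodo_basis \<Rightarrow> complex"
  where "attack_U1 n mb nb q B =
    tensor_op (qft mb n q 1) (tensor_op id_op (tensor_op (qft mb nb (2 ^ B) 1) id_op))"

definition attack_U2 :: "nat \<Rightarrow> nat \<Rightarrow> nat \<Rightarrow> frodo_basis \<Rightarrow> frodo_basis \<Rightarrow> complex" where
  "attack_U2 n mb q = tensor_op (qft mb n q (-1)) id_op"

abbreviation attack_query_state ::
    "nat \<Rightarrow> nat \<Rightarrow> nat \<Rightarrow> nat \<Rightarrow> nat \<Rightarrow> (nat \<Rightarrow> nat) \<Rightarrow> zmat \<Rightarrow> frodo_basis \<Rightarrow> complex" where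
  "attack_query_state n mb nb q B cols S \<equiv>
     apply_op (qspace n mb nb q B {0}) (frodo_oracle n mb nb q B S)
       (apply_op (qspace n mb nb q B {0}) (attack_U1 n mb nb q B) (ket (attack_init mb nb cols)))"

abbreviation attack_state ::
    "nat \<Rightarrow> nat \<Rightarrow> nat \<Rightarrow> nat \<Rightarrow> nat \<Rightarrow> (nat \<Rightarrow> nat) \<Rightarrow> zmat \<Rightarrow> frodo_basis \<Rightarrow> complex" where
  "attack_state n mb nb q B cols S \<equiv>
     final_state n mb nb q B {0} S (attack_init mb nb cols) (attack_U1 n mb nb q B) (attack_U2 n mb q)"

lemma attack_init_qspace: "0 < q \<Longrightarrow> 1 \<le> B \<Longrightarrow> attack_init mb nb cols \<in> qspace n mb nb q B {0}"
  by (simp add: attack_init_def qspace_def chosen_positions_zmats)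

lemma unitary_on_attack_U1:
  "0 < q \<Longrightarrow> finite W \<Longrightarrow> unitary_on (qspace n mb nb q B W) (attack_U1 n mb nb q B)"
  unfolding qspace_def attack_U1_def
  by (intro unitary_on_tensor_op unitary_on_qft unitary_on_id_op) auto

lemma unitary_on_attack_U2:
  "0 < q \<Longrightarrow> finite W \<Longrightarrow> unitary_on (qspace n mb nb q B W) (attack_U2 n mb q)"
  unfolding qspace_def attack_U2_def
  by (intro unitary_on_tensor_op unitary_on_qft unitary_on_id_op) auto

lemma attack_U1_init:
  assumes "\<forall>k<mb. cols k < nb"
  shows "attack_U1 n mb nb q B (X, \<lambda>_ _. 0, z, 0) (attack_init mb nb cols)
       = complex_of_real (1 / sqrt (real q ^ (mb * n)))
         * complex_of_real (1 / sqrt (real (2 ^ B) ^ (mb * nb)))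
         * e2pi (of_int (\<Sum>k<mb. z k (cols k)) / 2 ^ B)"
  by (simp add: attack_U1_def attack_init_def tensor_op_def id_op_def qft_def
      mat_inner_chosen_positions[OF assms])

lemma attack_query_state_eq:
  assumes "0 < q" "1 \<le> B" "\<forall>k<mb. cols k < nb" "X \<in> zmats mb n q" "z \<in> zmats mb nb (2 ^ B)"
  shows "attack_query_state n mb nb q B cols S (X, \<lambda>_ _. 0, z, 0)
       = complex_of_real (1 / sqrt (real q ^ (mb * n)))
         * complex_of_real (1 / sqrt (real (2 ^ B) ^ (mb * nb)))
         * ((\<Prod>k<mb. e2pi (of_int (z k (cols k)) / 2 ^ B))
            * (\<Prod>k<mb. dec_phase n q B (mat_col S (cols k)) (X k)))"
proof -
  define z' where "z' = (\<lambda>i j. if i < mb \<and> j < nb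
    then (z i j - frodo_dec n q B S X (\<lambda>_ _. 0) i j) mod 2 ^ B else z i j)"
  have "(X, \<lambda>_ _. 0, z, 0) \<in> qspace n mb nb q B {0}"
    using assms by (simp add: qspace_def)
  then have "attack_query_state n mb nb q B cols S (X, \<lambda>_ _. 0, z, 0)
      = attack_U1 n mb nb q B (X, \<lambda>_ _. 0, z', 0) (attack_init mb nb cols)"
    using assms by (simp add: apply_frodo_oracle apply_op_ket finite_qspace attack_init_qspace
        frodo_oracle_inv_def z'_def)
  also have "\<dots> = complex_of_real (1 / sqrt (real q ^ (mb * n)))
      * complex_of_real (1 / sqrt (real (2 ^ B) ^ (mb * nb)))
      * e2pi (of_int (\<Sum>k<mb. z' k (cols k)) / 2 ^ B)"
    using assms(3) by (rule attack_U1_init)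
  also have "e2pi (of_int (\<Sum>k<mb. z' k (cols k)) / 2 ^ B)
      = (\<Prod>k<mb. e2pi (of_int (z k (cols k)) / 2 ^ B) * dec_phase n q B (mat_col S (cols k)) (X k))"
    unfolding e2pi_sum_divide using assms(3)
    by (intro prod.cong refl) (simp add: z'_def e2pi_diff_mod_pow2 dec_phase_mat_col)
  finally show ?thesis
    by (simp add: prod.distrib)
qed

lemma attack_amplitude:
  assumes "0 < q" "1 \<le> B" "\<forall>k<mb. cols k < nb" "Y \<in> zmats mb n q" "z \<in> zmats mb nb (2 ^ B)"
  shows "attack_state n mb nb q B cols S (Y, \<lambda>_ _. 0, z, 0)
       = complex_of_real (1 / sqrt (real (2 ^ B) ^ (mb * nb)))
         * (\<Prod>k<mb. e2pi (of_int (z k (cols k)) / 2 ^ B))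
         * (\<Prod>k<mb. fourier_coeff q n (dec_phase n q B (mat_col S (cols k))) (Y k))"
proof -
  let ?R = "zmats mb nb q \<times> zmats mb nb (2 ^ B) \<times> {0::nat}"
  let ?\<psi> = "attack_query_state n mb nb q B cols S"
  let ?c1 = "complex_of_real (1 / sqrt (real q ^ (mb * n)))"
  let ?c3 = "complex_of_real (1 / sqrt (real (2 ^ B) ^ (mb * nb)))"
  let ?\<Theta> = "\<Prod>k<mb. e2pi (of_int (z k (cols k)) / 2 ^ B)"
  let ?\<Phi> = "\<lambda>X. \<Prod>k<mb. dec_phase n q B (mat_col S (cols k)) (X k)"
  let ?e = "\<lambda>X. e2pi (of_int (- mat_inner mb n Y X) / q)"
  have "attack_state n mb nb q B cols S (Y, \<lambda>_ _. 0, z, 0)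
      = apply_op (zmats mb n q \<times> ?R) (tensor_op (qft mb n q (-1)) id_op) ?\<psi> (Y, (\<lambda>_ _. 0, z, 0))"
    by (simp add: final_state_def Let_def attack_U2_def qspace_def)
  also have "\<dots> = (\<Sum>X\<in>zmats mb n q. qft mb n q (-1) Y X * ?\<psi> (X, \<lambda>_ _. 0, z, 0))"
    using assms by (intro apply_op_tensor_op_id_op) auto
  also have "\<dots> = (\<Sum>X\<in>zmats mb n q. ?c3 * ?\<Theta> * (?c1 * ?c1 * (?e X * ?\<Phi> X)))"
    using assms by (intro sum.cong refl) (simp add: attack_query_state_eq qft_def mult_ac)
  also have "\<dots> = ?c3 * ?\<Theta> * (?c1 * ?c1 * (\<Sum>X\<in>zmats mb n q. ?e X * ?\<Phi> X))"
    by (simp add: sum_distrib_left)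
  also have "?c1 * ?c1 = 1 / of_nat q ^ (mb * n)"
    using assms(1) by (simp flip: of_real_mult)
  finally show ?thesis
    by (simp add: prod_fourier_coeff)
qed

lemma norm_attack_amplitude:
  assumes "0 < q" "1 \<le> B" "\<forall>k<mb. cols k < nb" "Y \<in> zmats mb n q" "z \<in> zmats mb nb (2 ^ B)"
  shows "(cmod (attack_state n mb nb q B cols S (Y, \<lambda>_ _. 0, z, 0)))\<^sup>2
       = (\<Prod>k<mb. (cmod (fourier_coeff q n (dec_phase n q B (mat_col S (cols k))) (Y k)))\<^sup>2)
         / real (card (zmats mb nb (2 ^ B)))"
proof -
  let ?c = "1 / sqrt (real (2 ^ B) ^ (mb * nb))"
  have "cmod (\<Prod>k<mb. e2pi (of_int (z k (cols k)) / 2 ^ B)) = 1"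
    by (simp add: prod_norm[symmetric])
  moreover have "cmod (complex_of_real ?c) = ?c"
    unfolding norm_of_real by simp
  ultimately have "cmod (attack_state n mb nb q B cols S (Y, \<lambda>_ _. 0, z, 0))
      = ?c * (\<Prod>k<mb. cmod (fourier_coeff q n (dec_phase n q B (mat_col S (cols k))) (Y k)))"
    unfolding attack_amplitude[OF assms] norm_mult prod_norm by simp
  then show ?thesis
    by (simp add: power_divide prod_power_distrib card_zmats)
qed

lemma PiE_dflt_fixed_row_subset:
  assumes "s \<in> zvecs n q" "k < mb"
  shows "PiE_dflt mb (\<lambda>k'. if k' = k then {s} else zvecs n q) (\<lambda>_. 0) \<subseteq> {Y \<in> zmats mb n q. Y k = s}"
proof
  fix Y assume "Y \<in> PiE_dflt mb (\<lambda>k'. if k' = k then {s} else zvecs n q) (\<lambda>_. 0)"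
  then have Y: "\<And>i. i < mb \<Longrightarrow> Y i \<in> (if i = k then {s} else zvecs n q)"
      "\<And>i. \<not> i < mb \<Longrightarrow> Y i = (\<lambda>_. 0)"
    unfolding PiE_dflt_def by blast+
  have "Y i \<in> zvecs n q" if "i < mb" for i
    using Y(1)[OF that] assms(1) by (cases "i = k") auto
  then have "Y \<in> zmats mb n q"
    unfolding zmats_eq_PiE_dflt PiE_dflt_def using Y(2) by blast
  moreover have "Y k = s"
    using Y(1)[OF assms(2)] by simp
  ultimately show "Y \<in> {Y \<in> zmats mb n q. Y k = s}"
    by simp
qed

(* Only the outcomes with C2 = 0 are counted; by Parseval, the rows other than k contribute
   total weight 1. *)
lemma attack_success_prob_ge:
  assumes "0 < q" "1 \<le> B" "\<forall>k<mb. cols k < nb" "S \<in> zmats n nb q" "k < mb"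
  shows "(cmod (fourier_coeff q n (dec_phase n q B (mat_col S (cols k))) (mat_col S (cols k))))\<^sup>2
       \<le> meas_prob (qspace n mb nb q B {0}) (attack_state n mb nb q B cols S)
           (\<lambda>x. \<forall>i<n. fst x k i = S i (cols k))"
proof -
  let ?\<psi> = "attack_state n mb nb q B cols S"
  let ?g = "\<lambda>k' v. (cmod (fourier_coeff q n (dec_phase n q B (mat_col S (cols k'))) v))\<^sup>2"
  let ?s = "mat_col S (cols k)"
  let ?Z = "zmats mb nb (2 ^ B)"
  define Ys where "Ys = PiE_dflt mb (\<lambda>k'. if k' = k then {?s} else zvecs n q) (\<lambda>_. 0)"
  have Ys: "Y \<in> zmats mb n q" "Y k = ?s" if "Y \<in> Ys" for Y
    using that PiE_dflt_fixed_row_subset[OF mat_col_zvecs[OF assms(4)] assms(5)] assms(3,5)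
    unfolding Ys_def by auto
  have "(\<Sum>v\<in>zvecs n q. ?g k' v) = 1" for k'
    using assms(1) by (simp add: Parseval card_zvecs)
  then have "?g k ?s = (\<Prod>k'<mb. \<Sum>v\<in>(if k' = k then {?s} else zvecs n q). ?g k' v)"
    using assms(5) by (simp add: if_distrib[of "\<lambda>V. sum _ V"] cong: if_cong)
  also have "\<dots> = (\<Sum>Y\<in>Ys. \<Prod>k'<mb. ?g k' (Y k'))"
    unfolding Ys_def by (rule sum_PiE_dflt_prod[symmetric]) simp
  also have "\<dots> = (\<Sum>Y\<in>Ys. \<Sum>z\<in>?Z. (cmod (?\<psi> (Y, \<lambda>_ _. 0, z, 0)))\<^sup>2)"
    using Ys assms by (intro sum.cong refl) (simp add: norm_attack_amplitude card_zmats)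
  also have "\<dots> = (\<Sum>x\<in>(\<lambda>(Y, z). (Y, \<lambda>_ _. 0, z, 0)) ` (Ys \<times> ?Z). (cmod (?\<psi> x))\<^sup>2)"
    by (subst sum.reindex) (auto intro!: inj_onI simp: sum.cartesian_product case_prod_beta)
  also have "\<dots> \<le> meas_prob (qspace n mb nb q B {0}) ?\<psi> (\<lambda>x. \<forall>i<n. fst x k i = S i (cols k))"
    unfolding meas_prob_def
    by (rule sum_mono2) (use Ys assms in \<open>auto simp: qspace_def mat_col_def\<close>)
  finally show ?thesis .
qed

theorem theorem10:
  fixes n mb nb q B D :: nat and cols :: "nat \<Rightarrow> nat"
  assumes "q = 2 ^ D" and "1 \<le> D" and "1 \<le> B" and "B \<le> D"
    and "inj_on cols {..<mb}" and "cols ` {..<mb} \<subseteq> {..<nb}"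
  shows "\<exists>(W :: nat set) (x0 :: frodo_basis) U1 U2 (out :: frodo_basis \<Rightarrow> nat \<Rightarrow> nat \<Rightarrow> int).
     finite W \<and> x0 \<in> qspace n mb nb q B W
     \<and> unitary_on (qspace n mb nb q B W) U1 \<and> unitary_on (qspace n mb nb q B W) U2
     \<and> (\<forall>S \<in> zmats n nb q. \<forall>k < mb. (\<exists>i < n. odd (S i (cols k))) \<longrightarrow>
          meas_prob (qspace n mb nb q B W) (final_state n mb nb q B W S x0 U1 U2)
             (\<lambda>x. \<forall>i < n. out x k i = S i (cols k)) \<ge> 4 / pi\<^sup>2)"
proof -
  have q: "0 < q"
    using assms(1) by simp
  have cols: "\<forall>k<mb. cols k < nb"
    using assms(6) by auto
  have "4 / pi\<^sup>2 \<le> meas_prob (qspace n mb nb q B {0}) (attack_state n mb nb q B cols S)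
          (\<lambda>x. \<forall>i<n. fst x k i = S i (cols k))"
    if "S \<in> zmats n nb q" "k < mb" "i < n" "odd (S i (cols k))" for S k i
  proof -
    let ?c = "fourier_coeff q n (dec_phase n q B (mat_col S (cols k))) (mat_col S (cols k))"
    have "2 / pi \<le> cmod ?c"
      using that by (intro norm_fourier_coeff_dec_phase_ge[OF assms(1,3,4)]) (auto simp: mat_col_def)
    then have "(2 / pi)\<^sup>2 \<le> (cmod ?c)\<^sup>2"
      by (rule power_mono) simp
    then show ?thesis
      using attack_success_prob_ge[OF q assms(3) cols that(1,2)] by (simp add: power_divide)
  qed
  then show ?thesis
    using q assms(3)
    by (intro exI[of _ "{0}"] exI[of _ "attack_init mb nb cols"] exI[of _ "attack_U1 n mb nb q B"]
        exI[of _ "attack_U2 n mb q"] exI[of _ "\<lambda>x. fst x"])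
       (auto simp: attack_init_qspace unitary_on_attack_U1 unitary_on_attack_U2)
qed

end
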